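(* Let $n\ge3$, $x=(x',x_n)$, $\xi=(\xi',\xi_n)$, let $f\in C^\infty_0(\mathbb{R}^{n-1})$ and $K:=\nabla f$. Let $0<c<c'<1$ with $\frac{|K(x')|^2}{1+|K(x')|^2}<c$ for all $x'$, and let $\tilde\rho(\xi')$ be smooth with $\tilde\rho=1$ on $\{|\xi'|^2\le c'\}$ and support compactly contained in the open unit ball of $\mathbb{R}^{n-1}$. Let $p(x',\xi):=(1+|K|^2)\xi_n^2-2\xi_n(i-\xi'\cdot K)-(1-|\xi'|^2)$, $P_s:=\mathrm{Op}_h(\tilde\rho/p)$ and $R_s:=h^{-1}\big(\mathrm{Op}_h(p)P_s-\tilde\rho(hD')\big)$. Suppose $v\in L^r(\mathbb{R}^n)$, $1<r<\infty$, with $\mathrm{supp}\,v\subset\overline{\mathbb{R}^n_+}=\{x_n\ge0\}$. Then $\mathrm{supp}(P_sv)$ and $\mathrm{supp}(R_sv)$ are contained in $\overline{\mathbb{R}^n_+}$. In particular $P_sv|_{x_n=0}=0$.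
   Context: $\mathrm{Op}_h(a)u(x)=(2\pi h)^{-n}\iint e^{i(x-y)\cdot\xi/h}a(x,\xi)u(y)\,dy\,d\xi$; $\tilde\rho(hD')$ is the Fourier multiplier with symbol $\tilde\rho(\xi')$. (For $h$ small, $P_s$ maps $L^r$ boundedly into the semiclassical Sobolev space $W^{2,r}$, so the trace on $\{x_n=0\}$ is defined.) *)

theory Defs
  imports "HOL-Analysis.Analysis"
begin

definition tsupp :: "('a::topological_space \<Rightarrow> 'b::zero) \<Rightarrow> 'a set" where
  "tsupp g = closure {x. g x \<noteq> 0}"

definition pdiff :: "'a::real_normed_vector \<Rightarrow> ('a \<Rightarrow> 'b::real_normed_vector) \<Rightarrow> 'a \<Rightarrow> 'b" where
  "pdiff e g = (\<lambda>x. frechet_derivative g (at x) e)"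

definition smooth :: "('a::euclidean_space \<Rightarrow> 'b::real_normed_vector) \<Rightarrow> bool" where
  "smooth g \<longleftrightarrow> (\<forall>ds. set ds \<subseteq> Basis \<longrightarrow> (\<forall>x. foldr pdiff ds g differentiable (at x)))"

definition test_fun :: "('a::euclidean_space \<Rightarrow> complex) \<Rightarrow> bool" where
  "test_fun g \<longleftrightarrow> smooth g \<and> compact (tsupp g)"

definition grad :: "(real^'m \<Rightarrow> real) \<Rightarrow> real^'m \<Rightarrow> real^'m" where
  "grad f x' = (\<chi> j. frechet_derivative f (at x') (axis j 1))"

text \<open>Points of R^n are written x = (x', x_n) \<in> R^(n-1) \<times> R.\<close>

definition psym :: "(real^'m \<Rightarrow> real) \<Rightarrow> real^'m \<Rightarrow> (real^'m) \<times> real \<Rightarrow> complex" where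
  "psym f x' \<xi> = (let K = grad f x'; \<xi>' = fst \<xi>; \<xi>n = snd \<xi> in
     complex_of_real ((1 + (norm K)\<^sup>2) * \<xi>n\<^sup>2)
     - 2 * complex_of_real \<xi>n * (\<i> - complex_of_real (\<xi>' \<bullet> K))
     - complex_of_real (1 - (norm \<xi>')\<^sup>2))"

text \<open>Semiclassical quantization Op_h(a)u(x) = (2 pi h)^(-n) \<integral>\<integral> e^(i(x-y).xi/h) a(x,xi) u(y) dy dxi,
  with the xi-integral (absolutely convergent for the symbols used here) taken first.\<close>
definition Op_h :: "real \<Rightarrow> ('a::euclidean_space \<Rightarrow> 'a \<Rightarrow> complex) \<Rightarrow> ('a \<Rightarrow> complex) \<Rightarrow> 'a \<Rightarrow> complex" where
  "Op_h h a u x = complex_of_real ((2 * pi * h) powr (- real DIM('a))) *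
     (LINT y|lborel. (LINT \<xi>|lborel. cis ((x - y) \<bullet> \<xi> / h) * a x \<xi>) * u y)"

definition P_s :: "real \<Rightarrow> (real^'m \<Rightarrow> real) \<Rightarrow> (real^'m \<Rightarrow> complex)
     \<Rightarrow> ((real^'m) \<times> real \<Rightarrow> complex) \<Rightarrow> (real^'m) \<times> real \<Rightarrow> complex" where
  "P_s h f \<rho> = Op_h h (\<lambda>x \<xi>. \<rho> (fst \<xi>) / psym f (fst x) \<xi>)"

text \<open>Fourier multiplier rho~(hD') acting in the x' variables only.\<close>
definition mult_hD' :: "real \<Rightarrow> (real^'m \<Rightarrow> complex) \<Rightarrow> ((real^'m) \<times> real \<Rightarrow> complex)
     \<Rightarrow> (real^'m) \<times> real \<Rightarrow> complex" where
  "mult_hD' h \<rho> u x = complex_of_real ((2 * pi * h) powr (- real CARD('m))) *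
     (LINT y'|lborel. (LINT \<xi>'|lborel. cis ((fst x - y') \<bullet> \<xi>' / h) * \<rho> \<xi>') * u (y', snd x))"

definition hD :: "real \<Rightarrow> 'a::real_normed_vector \<Rightarrow> ('a \<Rightarrow> complex) \<Rightarrow> 'a \<Rightarrow> complex" where
  "hD h e g = (\<lambda>x. - \<i> * complex_of_real h * pdiff e g x)"

text \<open>Op_h(p) is the differential operator
  (1+|K|^2)(hD_n)^2 - 2 i hD_n + 2 \<Sum>_j K_j hD_j hD_n - 1 + \<Sum>_j (hD_j)^2.
  Its formal transpose (w.r.t. the bilinear pairing \<integral> w g), acting on test functions:
  (1+|K|^2)(hD_n)^2 g + 2 i hD_n g + 2 \<Sum>_j hD_j (K_j hD_n g) - g + \<Sum>_j (hD_j)^2 g.\<close>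
definition Op_p_transp :: "real \<Rightarrow> (real^'m \<Rightarrow> real) \<Rightarrow> ((real^'m) \<times> real \<Rightarrow> complex)
     \<Rightarrow> (real^'m) \<times> real \<Rightarrow> complex" where
  "Op_p_transp h f g x =
     (let en = (0::real^'m, 1::real); e = (\<lambda>j. (axis j (1::real), 0::real)) in
       complex_of_real (1 + (norm (grad f (fst x)))\<^sup>2) * hD h en (hD h en g) x
     + 2 * \<i> * hD h en g x
     + 2 * (\<Sum>j\<in>UNIV. hD h (e j) (\<lambda>y. complex_of_real (grad f (fst y) $ j) * hD h en g y) x)
     - g x
     + (\<Sum>j\<in>UNIV. hD h (e j) (hD h (e j) g) x))"

text \<open>The distribution R_s v = h^(-1)(Op_h(p) P_s v - rho~(hD') v), paired with a test function g.\<close>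
definition R_s_pair :: "real \<Rightarrow> (real^'m \<Rightarrow> real) \<Rightarrow> (real^'m \<Rightarrow> complex)
     \<Rightarrow> ((real^'m) \<times> real \<Rightarrow> complex) \<Rightarrow> ((real^'m) \<times> real \<Rightarrow> complex) \<Rightarrow> complex" where
  "R_s_pair h f \<rho> v g = complex_of_real (1 / h) *
     ((LINT x|lborel. P_s h f \<rho> v x * Op_p_transp h f g x)
      - (LINT x|lborel. mult_hD' h \<rho> v x * g x))"

end

theory Submission
  imports Defs "HOL-Complex_Analysis.Complex_Analysis"
begin

text \<open>For fixed x' and xi' with |xi'| < 1 the symbol p is a quadratic polynomial in xi_n
  without zeros in the closed lower half-plane, and 1/p = O(|xi_n|^-2) there. Closing the
  contour in the lower half-plane, where exp(i(x_n - y_n)xi_n/h) stays bounded when x_n \<le> y_n,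
  shows that the xi_n-integral of the kernel of P_s vanishes for x_n \<le> y_n. Hence P_s v(x) only
  sees v on {y_n < x_n} and vanishes for x_n \<le> 0; then R_s v vanishes on {x_n < 0} because
  Op_h(p) is a differential operator and rho(hD') acts in x' only.\<close>

lemma tendsto_integral_symmetric_intervals:
  fixes G :: "real \<Rightarrow> 'a::euclidean_space"
  assumes G: "integrable lborel G"
  shows "(\<lambda>n. integral {- real n..real n} G) \<longlonglongrightarrow> (LINT s|lborel. G s)"
proof -
  have "(\<lambda>n. LINT s:{- real n..real n}|lborel. G s) \<longlonglongrightarrow> (LINT s|lborel. G s)"
    unfolding set_lebesgue_integral_def
  proof (rule integral_dominated_convergence[where w="\<lambda>s. norm (G s)"])
    show "AE s in lborel. (\<lambda>n. indicator {- real n..real n} s *\<^sub>R G s) \<longlonglongrightarrow> G s"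
    proof (rule AE_I2, rule tendsto_eventually)
      fix s :: real
      obtain N :: nat where "\<bar>s\<bar> \<le> real N" using real_arch_simple by blast
      then show "\<forall>\<^sub>F n in sequentially. indicator {- real n..real n} s *\<^sub>R G s = G s"
        unfolding eventually_sequentially by (intro exI[of _ N]) (auto simp: indicator_def)
    qed
  qed (use G in \<open>auto simp: indicator_def\<close>)
  moreover have "(LINT s:{- real n..real n}|lborel. G s) = integral {- real n..real n} G" for n
    by (rule set_borel_integral_eq_integral(2))
      (simp add: set_integrable_def integrable_mult_indicator G)
  ultimately show ?thesis by simp
qed

lemma interior_lower_halfplane: "interior {z::complex. Im z \<le> 0} = {z. Im z < 0}"
  using interior_halfspace_le[of \<i> 0] by (simp add: inner_complex_def)

lemma norm_integral_real_segment_le: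
  fixes F :: "complex \<Rightarrow> complex"
  assumes cont: "continuous_on {z. Im z \<le> 0} F" and hol: "F holomorphic_on {z. Im z < 0}"
    and R: "R > 0" and B: "B \<ge> 0"
    and bound: "\<And>z. Im z \<le> 0 \<Longrightarrow> norm z = R \<Longrightarrow> norm (F z) \<le> B"
  shows "norm (integral {-R..R} (\<lambda>s. F (of_real s))) \<le> B * R * pi"
proof -
  define S where "S = {z::complex. Im z \<le> 0}"
  define arc where "arc = part_circlepath 0 R (-pi) 0"
  define lp where "lp = linepath (complex_of_real R) (complex_of_real (-R))"
  have arcS: "path_image arc \<subseteq> S"
  proof
    fix z assume "z \<in> path_image arc"
    then obtain t where t: "t \<in> closed_segment (-pi) 0" "z = R * cis t"
      unfolding arc_def path_image_part_circlepath' by auto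
    then have "sin (-t) \<ge> 0" by (intro sin_ge_zero) (auto simp: closed_segment_eq_real_ivl)
    then show "z \<in> S" using t R by (simp add: S_def mult_nonneg_nonpos)
  qed
  have lpS: "path_image lp \<subseteq> S"
    unfolding lp_def S_def path_image_linepath by (auto simp: closed_segment_def)
  have ends: "pathfinish arc = pathstart lp" "pathfinish lp = pathstart arc"
    unfolding arc_def lp_def by (simp_all add: exp_minus exp_pi_i)
  have "(F has_contour_integral 0) (arc +++ lp)"
  proof (rule Cauchy_theorem_convex[OF cont[folded S_def] _ finite.emptyI])
    show "convex S" unfolding S_def by (rule convex_halfspace_Im_le)
    show "F field_differentiable at z" if "z \<in> interior S - {}" for z
      using that hol open_halfspace_Im_lt
      by (auto simp: S_def interior_lower_halfplane holomorphic_on_imp_differentiable_at)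
    show "valid_path (arc +++ lp)" using ends by (simp add: arc_def lp_def valid_path_join)
    show "path_image (arc +++ lp) \<subseteq> S" using arcS lpS ends by (simp add: path_image_join)
    show "pathfinish (arc +++ lp) = pathstart (arc +++ lp)" using ends by simp
  qed
  moreover have "F contour_integrable_on arc"
    unfolding arc_def by (rule contour_integrable_continuous_part_circlepath)
      (rule continuous_on_subset[OF cont arcS[unfolded arc_def S_def]])
  moreover have "F contour_integrable_on lp"
    unfolding lp_def by (rule contour_integrable_continuous_linepath)
      (rule continuous_on_subset[OF cont lpS[unfolded lp_def S_def path_image_linepath]])
  ultimately have "contour_integral arc F + contour_integral lp F = 0"
    by (metis contour_integral_join contour_integral_unique arc_def lp_def
        valid_path_part_circlepath valid_path_linepath)
  moreover have "contour_integral lp F = - integral {-R..R} (\<lambda>s. F (of_real s))"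
  proof -
    have "contour_integral lp F = - contour_integral (linepath (of_real (-R)) (of_real R)) F"
      unfolding lp_def by (metis contour_integral_reversepath reversepath_linepath valid_path_linepath)
    also have "contour_integral (linepath (of_real (-R)) (of_real R)) F
        = integral {-R..R} (\<lambda>s. F (of_real s))"
      using R by (subst contour_integral_linepath_Reals_eq) auto
    finally show ?thesis .
  qed
  ultimately have eq: "integral {-R..R} (\<lambda>s. F (of_real s)) = contour_integral arc F"
    by simp
  have "norm (contour_integral arc F) \<le> B * R * \<bar>0 - (-pi)\<bar>"
    unfolding arc_def
  proof (rule contour_integral_bound_part_circlepath)
    show "F contour_integrable_on part_circlepath 0 R (- pi) 0"
      using \<open>F contour_integrable_on arc\<close> by (simp add: arc_def)
    fix z assume z: "z \<in> path_image (part_circlepath 0 R (- pi) 0)"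
    then show "norm (F z) \<le> B"
      using bound arcS in_path_image_part_circlepath[OF z] R by (auto simp: arc_def S_def)
  qed (use B R in auto)
  then show ?thesis using eq by simp
qed

lemma integral_real_line_eq_0_if_holomorphic_lower_halfplane:
  fixes F :: "complex \<Rightarrow> complex"
  assumes cont: "continuous_on {z. Im z \<le> 0} F" and hol: "F holomorphic_on {z. Im z < 0}"
    and R0: "R0 > 0" and M: "M \<ge> 0"
    and decay: "\<And>z. Im z \<le> 0 \<Longrightarrow> norm z \<ge> R0 \<Longrightarrow> norm (F z) \<le> M / (norm z)\<^sup>2"
  shows "(LINT s|lborel. F (of_real s)) = 0"
proof (cases "integrable lborel (\<lambda>s. F (of_real s))")
  case False
  then show ?thesis by (rule not_integrable_integral_eq)
next
  case True
  let ?I = "\<lambda>n. integral {- real n..real n} (\<lambda>s. F (of_real s))"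
  have "?I \<longlonglongrightarrow> 0"
  proof (rule Lim_null_comparison)
    obtain N :: nat where N: "R0 \<le> real N" using real_arch_simple by blast
    show "\<forall>\<^sub>F n in sequentially. norm (?I n) \<le> M * pi / real n"
      unfolding eventually_sequentially
    proof (intro exI[of _ N] allI impI)
      fix n assume "N \<le> n"
      then have n: "R0 \<le> real n" using N by linarith
      have "norm (F z) \<le> M / (real n)\<^sup>2" if "Im z \<le> 0" "norm z = real n" for z
        using decay[of z] that n by simp
      then have "norm (?I n) \<le> M / (real n)\<^sup>2 * real n * pi"
        by (intro norm_integral_real_segment_le[OF cont hol]) (use R0 M n in auto)
      also have "\<dots> = M * pi / real n" using n R0 by (simp add: power2_eq_square)
      finally show "norm (?I n) \<le> M * pi / real n" .
    qed
    show "(\<lambda>n. M * pi / real n) \<longlonglongrightarrow> 0" by (rule lim_const_over_n)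
  qed
  then show ?thesis
    using LIMSEQ_unique[OF tendsto_integral_symmetric_intervals[OF True]] by simp
qed

definition quad :: "real \<Rightarrow> real \<Rightarrow> real \<Rightarrow> complex \<Rightarrow> complex" where
  "quad A b C z = of_real A * z\<^sup>2 - 2 * z * (\<i> - of_real b) - of_real C"

lemma psym_eq_quad:
  "psym f x' (\<xi>', s) = quad (1 + (norm (grad f x'))\<^sup>2) (\<xi>' \<bullet> grad f x') (1 - (norm \<xi>')\<^sup>2) (of_real s)"
  unfolding psym_def quad_def Let_def by simp

lemma quad_nonzero_lower_halfplane:
  assumes A: "A > 0" and C: "C > 0" and z: "Im z \<le> 0"
  shows "quad A b C z \<noteq> 0"
proof
  assume q0: "quad A b C z = 0"
  define a where "a = Re z"
  define w where "w = Im z"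
  have z_eq: "z = Complex a w" by (simp add: a_def w_def)
  have "Re (quad A b C z) = A*(a^2-w^2) + 2*a*b + 2*w - C"
    and "Im (quad A b C z) = 2*(a*(A*w-1) + w*b)"
    unfolding z_eq quad_def by (simp_all add: power2_eq_square algebra_simps)
  then have re: "A*(a^2-w^2) + 2*a*b + 2*w - C = 0" and im: "w*b = -(a*(A*w-1))"
    using q0 by auto
  show False
  proof (cases "w = 0")
    case True
    then show False using re im C by simp
  next
    case False
    then have w_neg: "w < 0" using z w_def by simp
    \<comment> \<open>w times the real part, with b eliminated via the imaginary part, is a sum of
      terms that are nonnegative for w < 0, one of them (- C w) strictly positive\<close>
    have "w*(2*a*b) = 2*a*(w*b)" by simp
    also have "\<dots> = -2*a*a*(A*w-1)" using im by simp
    finally have "w*(A*(a^2-w^2) + 2*a*b + 2*w - C) = a^2*(2 - A*w) - A*w^3 + 2*w^2 - C*w"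
      by (simp add: algebra_simps power2_eq_square power3_eq_cube)
    moreover have "a^2*(2 - A*w) \<ge> 0" using A w_neg mult_pos_neg[of A w] by simp
    moreover have "- A*w^3 > 0" using A w_neg by (simp add: power3_eq_cube mult_pos_neg mult_neg_neg)
    moreover have "- C*w > 0" using C w_neg by (simp add: mult_pos_neg)
    moreover have "w^2 \<ge> 0" by simp
    ultimately show False using re by simp
  qed
qed

lemma norm_quad_ge:
  assumes A: "A > 0" and C: "C > 0" and z: "norm z \<ge> max 1 ((4*(1+\<bar>b\<bar>)+2*C)/A)"
  shows "A * (norm z)\<^sup>2 / 2 \<le> norm (quad A b C z)"
proof -
  define R where "R = norm z"
  have R1: "R \<ge> 1" using z by (simp add: R_def)
  have RA: "A*R \<ge> 4*(1+\<bar>b\<bar>)+2*C" using z A by (simp add: R_def field_simps)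
  have "norm (\<i> - of_real b) \<le> 1 + \<bar>b\<bar>"
    using norm_triangle_ineq4[of \<i> "of_real b"] by simp
  then have lin: "norm (2 * z * (\<i> - of_real b)) \<le> 2*R*(1+\<bar>b\<bar>)"
    using R1 by (simp add: R_def norm_mult mult_left_mono)
  have "of_real A * z^2 = quad A b C z + 2 * z * (\<i> - of_real b) + of_real C"
    by (simp add: quad_def)
  moreover have "norm (of_real A * z^2) = A*R^2" using A by (simp add: R_def norm_mult norm_power)
  ultimately have "A*R^2 \<le> norm (quad A b C z) + 2*R*(1+\<bar>b\<bar>) + C"
    using lin C norm_triangle_ineq[of "quad A b C z + 2 * z * (\<i> - of_real b)" "of_real C"]
      norm_triangle_ineq[of "quad A b C z" "2 * z * (\<i> - of_real b)"]
    by (smt (verit) norm_of_real)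
  moreover have "A*R^2/2 \<ge> 2*R*(1+\<bar>b\<bar>) + C"
  proof -
    have "A*R^2/2 = R*(A*R)/2" by (simp add: power2_eq_square)
    also have "\<dots> \<ge> R*(4*(1+\<bar>b\<bar>)+2*C)/2"
      using RA R1 by (intro divide_right_mono mult_left_mono) auto
    moreover have "R*(4*(1+\<bar>b\<bar>)+2*C)/2 = 2*R*(1+\<bar>b\<bar>) + R*C" by (simp add: algebra_simps)
    moreover have "R*C \<ge> C" using R1 C by simp
    ultimately show ?thesis by linarith
  qed
  ultimately show ?thesis by (simp add: R_def)
qed

lemma integral_exp_div_quad_eq_0:
  assumes A: "A > 0" and C: "C > 0" and \<tau>: "\<tau> \<le> 0"
  shows "(LINT s|lborel. exp (\<i> * of_real \<tau> * of_real s) / quad A b C (of_real s)) = 0"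
proof -
  define F where "F z = exp (\<i> * of_real \<tau> * z) / quad A b C z" for z
  define R0 where "R0 = max 1 ((4*(1+\<bar>b\<bar>)+2*C)/A)"
  have nz: "quad A b C z \<noteq> 0" if "Im z \<le> 0" for z
    using quad_nonzero_lower_halfplane[OF A C that] .
  have "continuous_on T (quad A b C)" "quad A b C holomorphic_on T" for T
    unfolding quad_def by (intro continuous_intros holomorphic_intros)+
  then have cont: "continuous_on {z. Im z \<le> 0} F" and hol: "F holomorphic_on {z. Im z < 0}"
    unfolding F_def using nz by (auto intro!: continuous_intros holomorphic_intros)
  have decay: "norm (F z) \<le> (2/A) / (norm z)\<^sup>2" if z: "Im z \<le> 0" "norm z \<ge> R0" for z
  proof -
    have "norm (exp (\<i> * of_real \<tau> * z)) \<le> 1"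
      using \<tau> z by (simp add: mult_nonpos_nonpos)
    moreover have "A * (norm z)\<^sup>2 / 2 \<le> norm (quad A b C z)"
      using norm_quad_ge[OF A C] z by (simp add: R0_def)
    moreover have "0 < A * (norm z)\<^sup>2 / 2"
      using A z by (intro divide_pos_pos mult_pos_pos) (auto simp: R0_def)
    ultimately have "norm (F z) \<le> 1 / (A * (norm z)\<^sup>2 / 2)"
      unfolding F_def norm_divide by (intro frac_le) auto
    then show ?thesis by simp
  qed
  have "R0 > 0" "2/A \<ge> 0" using A by (simp_all add: R0_def)
  then have "(LINT s|lborel. F (of_real s)) = 0"
    by (rule integral_real_line_eq_0_if_holomorphic_lower_halfplane[OF cont hol _ _ decay])
  then show ?thesis by (simp only: F_def)
qed

lemma norm_less_1_if_tsupp_subset_ball: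
  assumes "tsupp \<rho> \<subseteq> ball 0 1" "\<rho> \<xi> \<noteq> 0"
  shows "norm \<xi> < 1"
  using assms closure_subset[of "{x. \<rho> x \<noteq> 0}"] unfolding tsupp_def by (auto simp: dist_norm)

lemma P_s_kernel_fiber_eq_0:
  fixes f :: "real^'m \<Rightarrow> real" and \<rho> :: "real^'m \<Rightarrow> complex" and x y :: "(real^'m) \<times> real"
  assumes h: "h > 0" and supp: "tsupp \<rho> \<subseteq> ball 0 1" and xy: "snd x \<le> snd y"
  shows "(LINT s|lborel. cis ((x - y) \<bullet> (\<xi>', s) / h) * (\<rho> \<xi>' / psym f (fst x) (\<xi>', s))) = 0"
proof (cases "\<rho> \<xi>' = 0")
  case True
  then show ?thesis by simp
next
  case False
  define \<tau> where "\<tau> = (snd x - snd y) / h"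
  define A where "A = 1 + (norm (grad f (fst x)))\<^sup>2"
  define b where "b = \<xi>' \<bullet> grad f (fst x)"
  define C where "C = 1 - (norm \<xi>')\<^sup>2"
  have \<tau>: "\<tau> \<le> 0" unfolding \<tau>_def using xy h by (simp add: divide_nonpos_pos)
  have A: "A > 0" unfolding A_def by (simp add: add_pos_nonneg)
  have C: "C > 0"
    using norm_less_1_if_tsupp_subset_ball[OF supp False] abs_square_less_1[of "norm \<xi>'"]
    by (simp add: C_def)
  have factor: "cis ((x - y) \<bullet> (\<xi>', s) / h) * (\<rho> \<xi>' / psym f (fst x) (\<xi>', s))
      = (cis ((fst x - fst y) \<bullet> \<xi>' / h) * \<rho> \<xi>') *
        (exp (\<i> * of_real \<tau> * of_real s) / quad A b C (of_real s))" for s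
  proof -
    have "(x - y) \<bullet> (\<xi>', s) / h = (fst x - fst y) \<bullet> \<xi>' / h + \<tau> * s"
      using h by (cases x, cases y) (simp add: \<tau>_def field_simps)
    moreover have "cis (\<tau> * s) = exp (\<i> * of_real \<tau> * of_real s)"
      by (simp add: cis_conv_exp mult.assoc)
    ultimately have "cis ((x - y) \<bullet> (\<xi>', s) / h)
        = cis ((fst x - fst y) \<bullet> \<xi>' / h) * exp (\<i> * of_real \<tau> * of_real s)"
      using cis_mult[of "(fst x - fst y) \<bullet> \<xi>' / h" "\<tau> * s"] by simp
    then show ?thesis by (simp add: psym_eq_quad A_def b_def C_def)
  qed
  have "(LINT s|lborel. cis ((x - y) \<bullet> (\<xi>', s) / h) * (\<rho> \<xi>' / psym f (fst x) (\<xi>', s)))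
      = (cis ((fst x - fst y) \<bullet> \<xi>' / h) * \<rho> \<xi>') *
        (LINT s|lborel. exp (\<i> * of_real \<tau> * of_real s) / quad A b C (of_real s))"
    by (simp only: factor integral_mult_right_zero)
  then show ?thesis using integral_exp_div_quad_eq_0[OF A C \<tau>] by simp
qed

lemma P_s_kernel_eq_0:
  fixes f :: "real^'m \<Rightarrow> real" and \<rho> :: "real^'m \<Rightarrow> complex" and x y :: "(real^'m) \<times> real"
  assumes h: "h > 0" and supp: "tsupp \<rho> \<subseteq> ball 0 1" and xy: "snd x \<le> snd y"
  shows "(LINT \<xi>|lborel. cis ((x - y) \<bullet> \<xi> / h) * (\<rho> (fst \<xi>) / psym f (fst x) \<xi>)) = 0"
proof (cases "integrable lborel (\<lambda>\<xi>. cis ((x - y) \<bullet> \<xi> / h) * (\<rho> (fst \<xi>) / psym f (fst x) \<xi>))")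
  case False
  then show ?thesis by (rule not_integrable_integral_eq)
next
  case True
  let ?\<Phi> = "\<lambda>\<xi>. cis ((x - y) \<bullet> \<xi> / h) * (\<rho> (fst \<xi>) / psym f (fst x) \<xi>)"
  have pair: "pair_sigma_finite (lborel :: (real^'m) measure) (lborel :: real measure)"
    by (simp add: pair_sigma_finite_def lborel.sigma_finite_measure_axioms)
  have "integrable (lborel \<Otimes>\<^sub>M lborel) ?\<Phi>" using True by (simp add: lborel_prod)
  then have "(LINT \<xi>|(lborel \<Otimes>\<^sub>M lborel). ?\<Phi> \<xi>) = (LINT \<xi>'|lborel. LINT s|lborel. ?\<Phi> (\<xi>', s))"
    by (rule pair_sigma_finite.integral_fst'[OF pair, symmetric])
  then show ?thesis using P_s_kernel_fiber_eq_0[OF h supp xy] by (simp add: lborel_prod)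
qed

lemma P_s_eq_0_on_closed_lower_halfspace:
  assumes h: "h > 0" and supp: "tsupp \<rho> \<subseteq> ball 0 1"
    and v_supp: "AE y in lborel. snd y < 0 \<longrightarrow> v y = 0" and x: "snd x \<le> 0"
  shows "P_s h f \<rho> v x = 0"
proof -
  have "AE y in lborel. (LINT \<xi>|lborel. cis ((x - y) \<bullet> \<xi> / h) * (\<rho> (fst \<xi>) / psym f (fst x) \<xi>)) * v y = 0"
    using v_supp
  proof eventually_elim
    case (elim y)
    then show ?case
      using P_s_kernel_eq_0[OF h supp, of x y f] x by (cases "snd y < 0") auto
  qed
  then have "(LINT y|lborel. (LINT \<xi>|lborel. cis ((x - y) \<bullet> \<xi> / h) * (\<rho> (fst \<xi>) / psym f (fst x) \<xi>)) * v y) = 0"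
    by (rule integral_eq_zero_AE)
  then show ?thesis unfolding P_s_def Op_h_def by simp
qed

lemma AE_lborel_snd:
  fixes Q :: "'b::euclidean_space \<Rightarrow> bool"
  assumes "AE t in lborel. Q t"
  shows "AE z in (lborel :: ('a::euclidean_space \<times> 'b) measure). Q (snd z)"
proof -
  obtain N where N: "{t \<in> space lborel. \<not> Q t} \<subseteq> N" "emeasure lborel N = 0" "N \<in> sets lborel"
    using assms by (rule AE_E)
  have "(UNIV :: 'a set) \<times> N \<in> null_sets (lborel \<Otimes>\<^sub>M lborel)"
    using N(2,3) by (intro lborel.times_in_null_sets2) auto
  then have "UNIV \<times> N \<in> null_sets (lborel :: ('a \<times> 'b) measure)" by (simp add: lborel_prod)
  then show ?thesis using N by (intro AE_I'[of "UNIV \<times> N"]) auto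
qed

lemma AE_lborel_snd_AE_fst:
  fixes P :: "'a::euclidean_space \<times> 'b::euclidean_space \<Rightarrow> bool"
  assumes P_meas[measurable]: "Measurable.pred (lborel \<Otimes>\<^sub>M lborel) P"
    and ae: "AE z in lborel. P z"
  shows "AE t in lborel. AE y in lborel. P (y, t)"
proof -
  have pair: "pair_sigma_finite (lborel :: 'a measure) (lborel :: 'b measure)"
    by (simp add: pair_sigma_finite_def lborel.sigma_finite_measure_axioms)
  have "AE z in (lborel :: 'a measure) \<Otimes>\<^sub>M (lborel :: 'b measure). P z"
    using ae by (simp only: lborel_prod)
  then have "AE y in lborel. AE t in lborel. P (y, t)"
    by (rule pair_sigma_finite.AE_pair[OF pair])
  moreover have "{z \<in> space (lborel \<Otimes>\<^sub>M lborel). P (fst z, snd z)} \<in> sets (lborel \<Otimes>\<^sub>M (lborel :: 'b measure))"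
    by (simp only: prod.collapse) measurable
  ultimately show ?thesis using pair_sigma_finite.AE_commute[OF pair] by simp
qed

lemma mult_hD'_AE_eq_0_on_lower_halfspace:
  assumes v_meas: "v \<in> borel_measurable lborel"
    and v_supp: "AE y in lborel. snd y < 0 \<longrightarrow> v y = 0"
  shows "AE x in lborel. snd x < 0 \<longrightarrow> mult_hD' h \<rho> v x = 0"
proof -
  have [measurable]: "v \<in> borel_measurable (lborel \<Otimes>\<^sub>M lborel)"
    using v_meas by (simp add: lborel_prod)
  have "Measurable.pred (lborel \<Otimes>\<^sub>M lborel) (\<lambda>z. snd z < 0 \<longrightarrow> v z = 0)"
    by measurable
  from AE_lborel_snd_AE_fst[OF this v_supp]
  have "AE t in lborel. AE y' in lborel. t < 0 \<longrightarrow> v (y', t) = 0" by simp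
  then have "AE x in lborel. AE y' in lborel. snd x < 0 \<longrightarrow> v (y', snd x) = 0"
    by (rule AE_lborel_snd)
  then show ?thesis
  proof eventually_elim
    case (elim x)
    show ?case
    proof
      assume "snd x < 0"
      have "AE y' in lborel.
          (LINT \<xi>'|lborel. cis ((fst x - y') \<bullet> \<xi>' / h) * \<rho> \<xi>') * v (y', snd x) = 0"
        using elim by eventually_elim (use \<open>snd x < 0\<close> in simp)
      then show "mult_hD' h \<rho> v x = 0"
        unfolding mult_hD'_def by (simp add: integral_eq_zero_AE)
    qed
  qed
qed

lemma hD_eq_0_on_open:
  assumes U: "open U" and G: "\<And>y. y \<in> U \<Longrightarrow> G y = 0" and y: "y \<in> U"
  shows "hD h e G y = 0"
proof -
  have "(G has_derivative (\<lambda>_. 0)) (at y)"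
    by (rule has_derivative_transform_within_open[OF has_derivative_const U y]) (simp add: G)
  then have "frechet_derivative G (at y) = (\<lambda>_. 0)" by (simp add: frechet_derivative_at[symmetric])
  then show ?thesis by (simp add: hD_def pdiff_def)
qed

lemma Op_p_transp_eq_0_outside_tsupp:
  assumes x: "x \<notin> tsupp g"
  shows "Op_p_transp h f g x = 0"
proof -
  define U where "U = - tsupp g"
  have U: "open U" unfolding U_def tsupp_def by auto
  have g0: "\<And>y. y \<in> U \<Longrightarrow> g y = 0"
    using closure_subset[of "{x. g x \<noteq> 0}"] by (auto simp: U_def tsupp_def)
  have hD_g: "\<And>e y. y \<in> U \<Longrightarrow> hD h e g y = 0" by (rule hD_eq_0_on_open[OF U g0])
  have hD_hD_g: "\<And>e e' y. y \<in> U \<Longrightarrow> hD h e (hD h e' g) y = 0"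
    by (rule hD_eq_0_on_open[OF U hD_g])
  have hD_K_hD_g: "\<And>e e' y j. y \<in> U \<Longrightarrow>
      hD h e (\<lambda>y. complex_of_real (grad f (fst y) $ j) * hD h e' g y) y = 0"
    by (rule hD_eq_0_on_open[OF U]) (simp add: hD_g)
  show ?thesis unfolding Op_p_transp_def Let_def
    using x by (simp add: U_def hD_g hD_hD_g hD_K_hD_g g0)
qed

lemma R_s_pair_eq_0:
  assumes h: "h > 0" and supp: "tsupp \<rho> \<subseteq> ball 0 1" and v_meas: "v \<in> borel_measurable lborel"
    and v_supp: "AE y in lborel. snd y < 0 \<longrightarrow> v y = 0" and g: "tsupp g \<subseteq> {x. snd x < 0}"
  shows "R_s_pair h f \<rho> v g = 0"
proof -
  have g_neg: "snd x < 0" if "g x \<noteq> 0" for x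
    using g that closure_subset[of "{x. g x \<noteq> 0}"] unfolding tsupp_def by auto
  have "P_s h f \<rho> v x * Op_p_transp h f g x = 0" for x
  proof (cases "snd x < 0")
    case True
    then show ?thesis using P_s_eq_0_on_closed_lower_halfspace[OF h supp v_supp] by simp
  next
    case False
    then have "x \<notin> tsupp g" using g by auto
    then show ?thesis by (simp add: Op_p_transp_eq_0_outside_tsupp)
  qed
  moreover have "AE x in lborel. mult_hD' h \<rho> v x * g x = 0"
    using mult_hD'_AE_eq_0_on_lower_halfspace[OF v_meas v_supp]
    by eventually_elim (use g_neg in auto)
  ultimately show ?thesis
    unfolding R_s_pair_def by (simp add: integral_eq_zero_AE)
qed

theorem proposition5p7:
  fixes f :: "real^'m \<Rightarrow> real" and \<rho> :: "real^'m \<Rightarrow> complex"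
    and v :: "(real^'m) \<times> real \<Rightarrow> complex" and c c' h r :: real
  assumes n_ge_3: "CARD('m) \<ge> 2"
    and f_smooth: "smooth f" and f_cpt: "compact (tsupp f)"
    and c_pos: "0 < c" and cc': "c < c'" and c'_lt1: "c' < 1"
    and K_bound: "\<forall>x'. (norm (grad f x'))\<^sup>2 / (1 + (norm (grad f x'))\<^sup>2) < c"
    and \<rho>_smooth: "smooth \<rho>"
    and \<rho>_one: "\<forall>\<xi>'. (norm \<xi>')\<^sup>2 \<le> c' \<longrightarrow> \<rho> \<xi>' = 1"
    and \<rho>_supp: "compact (tsupp \<rho>)" "tsupp \<rho> \<subseteq> ball 0 1"
    and h_pos: "0 < h"
    and r: "1 < r"
    and v_meas: "v \<in> borel_measurable lborel"
    and v_Lr: "integrable lborel (\<lambda>x. norm (v x) powr r)"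
    and v_supp: "AE x in lborel. snd x < 0 \<longrightarrow> v x = 0"
  shows "(\<forall>x. snd x < 0 \<longrightarrow> P_s h f \<rho> v x = 0)
       \<and> (\<forall>g. test_fun g \<and> tsupp g \<subseteq> {x. snd x < 0} \<longrightarrow> R_s_pair h f \<rho> v g = 0)
       \<and> (\<forall>x'. P_s h f \<rho> v (x', 0) = 0)"
  using P_s_eq_0_on_closed_lower_halfspace[OF h_pos \<rho>_supp(2) v_supp]
    R_s_pair_eq_0[OF h_pos \<rho>_supp(2) v_meas v_supp]
  by auto

end
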